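(* For $n\ge3$ and $1\le k<n$, let $X_k:=\#\{i:\rho(i)=k\}$. Then $X_k\in\{0,1,2\}$, \[ \mathbf E(X_k)=\frac{2k}{n-1},\qquad \mathbf{Var}(X_k)=\frac{2k(n-k-1)(n-3)}{(n-1)^2(n-2)}, \] and for $1\le k<l<n$, \[ \mathbf{Cov}(X_k,X_l)=-\frac{4k(n-l-1)}{(n-1)^2(n-2)}. \]
   Context: Kingman's $n$-coalescent: partitions $\pi_1=\{\{1,\dots,n\}\},\pi_2,\dots,\pi_n=\{\{1\},\dots,\{n\}\}$ of $\{1,\dots,n\}$, where $\pi_k$ has $k$ blocks and $\pi_{k-1}$ is obtained from $\pi_k$ by merging two blocks of $\pi_k$ chosen uniformly at random (independently of the past). For a leaf $i$ let $\rho(i):=\max\{k\ge1:\{i\}\notin\pi_k\}$. *)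

theory Defs
  imports "HOL-Probability.Probability"
begin

definition merge_blocks :: "'a set set \<Rightarrow> 'a set set \<Rightarrow> 'a set set" where
  "merge_blocks P AB = (P - AB) \<union> {\<Union>AB}"

definition coal_step :: "'a set set \<Rightarrow> 'a set set pmf" where
  "coal_step P = map_pmf (merge_blocks P)
     (pmf_of_set {{A, B} | A B. A \<in> P \<and> B \<in> P \<and> A \<noteq> B})"

fun coal_path :: "'a set set \<Rightarrow> nat \<Rightarrow> 'a set set list pmf" where
  "coal_path P 0 = return_pmf [P]"
| "coal_path P (Suc m) = bind_pmf (coal_step P) (\<lambda>Q. map_pmf (\<lambda>L. P # L) (coal_path Q m))"

text \<open>Kingman's n-coalescent on {1..n}: the list [pi_n, pi_(n-1), ..., pi_1].\<close>
definition kingman :: "nat \<Rightarrow> nat set set list pmf" where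
  "kingman n = coal_path ((\<lambda>i. {i}) ` {1..n}) (n - 1)"

definition part :: "nat \<Rightarrow> nat set set list \<Rightarrow> nat \<Rightarrow> nat set set" where
  "part n L k = L ! (n - k)"

definition rho :: "nat \<Rightarrow> nat set set list \<Rightarrow> nat \<Rightarrow> nat" where
  "rho n L i = Max {k \<in> {1..n}. {i} \<notin> part n L k}"

definition Xk :: "nat \<Rightarrow> nat \<Rightarrow> nat set set list \<Rightarrow> nat" where
  "Xk n k L = card {i \<in> {1..n}. rho n L i = k}"

end

theory Submission
  imports Defs
begin

text \<open>
  Write S_a for the number of singleton blocks of pi_a.  A leaf i has rho(i) = k exactly when
  {i} is a block of pi_(k+1) but not of pi_k, so X_k = S_(k+1) - S_k, and X_k \<le> 2 because a
  merge destroys at most two singletons.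

  Given j blocks of which s are singletons, one merge lowers the singleton count by 2, 1 or 0
  with probabilities C(s,2), s(j-s), C(j-s,2) over C(j,2).  For a fixed target level a, the
  function C(a,2)/C(j,2) * s and a suitable quadratic in s are harmonic for this transition,
  and they equal S_a and S_a^2 once a blocks remain.  A general lemma on paths of the
  coalescent (conditioning on an intermediate time turns a later harmonic value into the current
  one) therefore yields E(S_a) and E(S_a S_b).  Expectation, variance and covariances of the
  X_k follow by linearity.
\<close>

definition singletons :: "'a set set \<Rightarrow> 'a set" where
  "singletons P = {i. {i} \<in> P}"

definition singleton_blocks :: "'a set set \<Rightarrow> 'a set set" where
  "singleton_blocks P = {A \<in> P. card A = 1}"

abbreviation nsing :: "'a set set \<Rightarrow> nat" where
  "nsing P \<equiv> card (singletons P)"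

definition finite_partition :: "'a set set \<Rightarrow> bool" where
  "finite_partition P \<longleftrightarrow> finite P \<and> {} \<notin> P \<and> pairwise disjnt P"

lemma singleton_blocks_eq: "singleton_blocks P = (\<lambda>i. {i}) ` singletons P"
  unfolding singleton_blocks_def singletons_def by (auto simp: card_1_singleton_iff)

lemma card_singleton_blocks: "card (singleton_blocks P) = nsing P"
  unfolding singleton_blocks_eq by (rule card_image) (simp add: inj_on_def)

lemma singletons_mono:
  "singleton_blocks Q \<subseteq> singleton_blocks P \<Longrightarrow> singletons Q \<subseteq> singletons P"
  unfolding singleton_blocks_eq by auto

lemma coal_step_eq:
  "coal_step P = map_pmf (merge_blocks P) (pmf_of_set {B. B \<subseteq> P \<and> card B = 2})"
proof -
  have "{{A, B} | A B. A \<in> P \<and> B \<in> P \<and> A \<noteq> B} = {B. B \<subseteq> P \<and> card B = 2}"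
    by (auto simp: card_2_iff)
  then show ?thesis
    unfolding coal_step_def by simp
qed

lemma two_subsets_nonempty:
  assumes "finite P" "2 \<le> card P"
  shows "{B. B \<subseteq> P \<and> card B = 2} \<noteq> {}"
  using assms by (subst card_0_eq[symmetric]) (auto simp: n_subsets)

lemma merge_pair:
  assumes P: "finite_partition P" and B: "B \<subseteq> P" "card B = 2"
  defines "Q \<equiv> merge_blocks P B"
  shows "finite_partition Q" "card Q = card P - 1"
    "singleton_blocks Q = singleton_blocks P - B" "nsing Q < card Q"
proof -
  obtain A1 A2 where A: "B = {A1, A2}" "A1 \<noteq> A2" "A1 \<in> P" "A2 \<in> P"
    using B by (auto simp: card_2_iff)
  have fin: "finite P" and ne: "A1 \<noteq> {}" "A2 \<noteq> {}" and dj: "pairwise disjnt P"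
    using P A unfolding finite_partition_def by auto
  have disj: "disjnt C (A1 \<union> A2)" if "C \<in> P - B" for C
    using dj that A unfolding pairwise_def disjnt_def by auto
  have new: "A1 \<union> A2 \<notin> P - B"
    using disj ne unfolding disjnt_def by blast
  have not_single: "card (A1 \<union> A2) \<noteq> 1"
    using ne A(2) by (auto simp: card_1_singleton_iff Un_singleton_iff)
  have Q: "Q = insert (A1 \<union> A2) (P - B)"
    unfolding Q_def merge_blocks_def A by auto
  show "card Q = card P - 1"
    unfolding Q using fin new B card_mono[OF fin B(1)]
    by (simp add: card_Diff_subset finite_subset)
  show "finite_partition Q"
    using P ne disj unfolding Q finite_partition_def pairwise_insert
    by (auto simp: pairwise_def disjnt_sym)
  show sb: "singleton_blocks Q = singleton_blocks P - B"
    unfolding Q singleton_blocks_def using not_single by auto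
  have "singleton_blocks Q \<subset> Q"
    using not_single unfolding Q singleton_blocks_def by auto
  then show "nsing Q < card Q"
    using fin Q by (simp add: psubset_card_mono flip: card_singleton_blocks)
qed

lemma card_pairs_inside:
  assumes "finite P" "S \<subseteq> P"
  shows "card {B. B \<subseteq> P \<and> card B = 2 \<and> card (B \<inter> S) = 2} = card S choose 2"
proof -
  have "card (B \<inter> S) = 2 \<longleftrightarrow> B \<subseteq> S" if "card B = 2" for B :: "'a set"
    using that card_subset_eq[of B "B \<inter> S"] card_ge_0_finite[of B] by (auto simp: Int_absorb2)
  then have "{B. B \<subseteq> P \<and> card B = 2 \<and> card (B \<inter> S) = 2} = {B. B \<subseteq> S \<and> card B = 2}"
    using assms by auto
  then show ?thesis
    using assms by (simp add: n_subsets finite_subset)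
qed

lemma card_pairs_outside:
  assumes "finite P" "S \<subseteq> P"
  shows "card {B. B \<subseteq> P \<and> card B = 2 \<and> card (B \<inter> S) = 0} = card (P - S) choose 2"
proof -
  have "{B. B \<subseteq> P \<and> card B = 2 \<and> card (B \<inter> S) = 0} = {B. B \<subseteq> P - S \<and> card B = 2}"
    using assms by (auto simp: card_2_iff)
  then show ?thesis
    using assms by (simp add: n_subsets)
qed

text \<open>Pairs meeting S in exactly one point are in bijection with S times (P - S).\<close>
lemma card_pairs_across:
  assumes "finite P" "S \<subseteq> P"
  shows "card {B. B \<subseteq> P \<and> card B = 2 \<and> card (B \<inter> S) = 1} = card S * card (P - S)"
proof -
  have "{B. B \<subseteq> P \<and> card B = 2 \<and> card (B \<inter> S) = 1} = (\<lambda>(x, y). {x, y}) ` (S \<times> (P - S))"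
  proof (intro equalityI subsetI)
    fix B assume "B \<in> {B. B \<subseteq> P \<and> card B = 2 \<and> card (B \<inter> S) = 1}"
    then obtain x y where "B = {x, y}" "x \<noteq> y" "{x, y} \<subseteq> P" "card ({x, y} \<inter> S) = 1"
      by (auto simp: card_2_iff)
    then show "B \<in> (\<lambda>(x, y). {x, y}) ` (S \<times> (P - S))"
      by (cases "x \<in> S"; cases "y \<in> S") (auto simp: insert_commute)
  qed (use assms in \<open>auto simp: card_insert_if\<close>)
  moreover have "inj_on (\<lambda>(x, y). {x, y}) (S \<times> (P - S))"
    by (auto simp: inj_on_def doubleton_eq_iff)
  ultimately show ?thesis
    using assms by (simp add: card_image card_cartesian_product)
qed

lemma sum_pairs_by_intersection:
  fixes f :: "nat \<Rightarrow> real"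
  assumes fin: "finite P" and S: "S \<subseteq> P"
  shows "(\<Sum>B\<in>{B. B \<subseteq> P \<and> card B = 2}. f (card (B \<inter> S)))
           = real (card (P - S) choose 2) * f 0 + real (card S * card (P - S)) * f 1
               + real (card S choose 2) * f 2"
proof -
  define T where "T = {B. B \<subseteq> P \<and> card B = 2}"
  have finT: "finite T"
    using fin unfolding T_def by (auto intro: finite_subset[of _ "Pow P"])
  have img: "(\<lambda>B. card (B \<inter> S)) ` T \<subseteq> {0, 1, 2}"
  proof
    fix c assume "c \<in> (\<lambda>B. card (B \<inter> S)) ` T"
    then obtain B where "B \<in> T" "c = card (B \<inter> S)"
      by auto
    then have "c \<le> 2"
      using card_mono[of B "B \<inter> S"] card_ge_0_finite[of B] unfolding T_def by auto
    then show "c \<in> {0, 1, 2}"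
      by auto
  qed
  have "(\<Sum>B\<in>T. f (card (B \<inter> S))) = (\<Sum>c\<in>{0, 1, 2}. \<Sum>B\<in>{B \<in> T. card (B \<inter> S) = c}. f c)"
    by (subst sum.group[OF finT _ img, symmetric]) (auto intro!: sum.cong)
  also have "\<dots> = real (card (P - S) choose 2) * f 0 + real (card S * card (P - S)) * f 1
                    + real (card S choose 2) * f 2"
    using card_pairs_inside[OF fin S] card_pairs_outside[OF fin S] card_pairs_across[OF fin S]
    unfolding T_def by simp
  finally show ?thesis
    unfolding T_def .
qed

lemma real_choose_two: "real (n choose 2) = real n * (real n - 1) / 2"
  by (induction n) (auto simp: numeral_2_eq_2 field_simps)

lemma nsing_merge_pair:
  assumes P: "finite_partition P" and B: "B \<subseteq> P" "card B = 2"
  shows "nsing (merge_blocks P B) = nsing P - card (B \<inter> singleton_blocks P)"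
    "card (B \<inter> singleton_blocks P) \<le> nsing P"
proof -
  have fin: "finite (singleton_blocks P)"
    using P unfolding finite_partition_def singleton_blocks_def by auto
  show "card (B \<inter> singleton_blocks P) \<le> nsing P"
    using fin by (simp add: card_mono flip: card_singleton_blocks)
  show "nsing (merge_blocks P B) = nsing P - card (B \<inter> singleton_blocks P)"
    using merge_pair(3)[OF P B] fin
    by (simp add: card_Diff_subset_Int Int_commute flip: card_singleton_blocks)
qed

text \<open>The mean of g at the next singleton count, when j blocks of which s are singletons remain:
  the count drops by 2, 1 or 0 with probabilities C(s,2), s(j-s), C(j-s,2) over C(j,2).\<close>
definition step_mean :: "real \<Rightarrow> real \<Rightarrow> (real \<Rightarrow> real) \<Rightarrow> real" where
  "step_mean j s g =
     (s * (s - 1) * g (s - 2) + 2 * s * (j - s) * g (s - 1) + (j - s) * (j - s - 1) * g s)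
       / (j * (j - 1))"

lemma expectation_coal_step:
  fixes g :: "real \<Rightarrow> real"
  assumes P: "finite_partition P" "2 \<le> card P"
  shows "measure_pmf.expectation (coal_step P) (\<lambda>Q. g (real (nsing Q)))
           = step_mean (real (card P)) (real (nsing P)) g"
proof -
  define T where "T = {B. B \<subseteq> P \<and> card B = 2}"
  define S where "S = singleton_blocks P"
  define j where "j = card P"
  define s where "s = nsing P"
  have fin: "finite P"
    using P by (simp add: finite_partition_def)
  have finT: "finite T" and T_ne: "T \<noteq> {}" and cardT: "card T = j choose 2"
    using fin two_subsets_nonempty[OF fin P(2)] unfolding T_def j_def
    by (auto simp: n_subsets intro: finite_subset[of _ "Pow P"])
  have SP: "S \<subseteq> P"
    unfolding S_def singleton_blocks_def by auto
  have cardS: "card S = s"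
    unfolding S_def s_def by (rule card_singleton_blocks)
  have s_le: "s \<le> j" and card_rest: "card (P - S) = j - s"
    using fin SP cardS unfolding j_def by (auto simp: card_mono card_Diff_subset finite_subset)
  define X where "X = real s * (real s - 1) * g (real s - 2) + 2 * real s * (real j - real s) * g (real s - 1)
                    + (real j - real s) * (real j - real s - 1) * g (real s)"
  have "(\<Sum>B\<in>T. g (real (nsing (merge_blocks P B))))
          = (\<Sum>B\<in>T. g (real s - real (card (B \<inter> S))))"
    using nsing_merge_pair[OF P(1)] unfolding T_def S_def s_def by (simp add: of_nat_diff)
  also have "\<dots> = real (j - s choose 2) * g (real s) + real s * real (j - s) * g (real s - 1)
                    + real (s choose 2) * g (real s - 2)"
    using sum_pairs_by_intersection[OF fin SP, of "\<lambda>c. g (real s - real c)"]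
    unfolding T_def cardS card_rest by simp
  also have "\<dots> = X / 2"
    unfolding X_def real_choose_two using s_le by (simp add: of_nat_diff field_simps)
  finally have sum_eq: "(\<Sum>B\<in>T. g (real (nsing (merge_blocks P B)))) = X / 2" .
  have "measure_pmf.expectation (coal_step P) (\<lambda>Q. g (real (nsing Q)))
          = (\<Sum>B\<in>T. g (real (nsing (merge_blocks P B)))) / real (card T)"
    unfolding coal_step_eq T_def[symmetric] using finT T_ne by (simp add: integral_pmf_of_set)
  also have "\<dots> = (X / 2) / (real j * (real j - 1) / 2)"
    unfolding sum_eq cardT real_choose_two ..
  also have "\<dots> = step_mean (real j) (real s) g"
    unfolding step_mean_def X_def[symmetric] by simp
  finally show ?thesis
    unfolding j_def s_def .
qed

section \<open>Harmonic functions of the singleton count\<close>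

text \<open>For a target level i, the conditional moments of the singleton count at level i, given j
  blocks and s singletons now, are mean_factor j i * s and sq_mean j i s.  Both are
  harmonic for the one-step transition above level i, and they reproduce s and s^2 at level i.\<close>
definition mean_factor :: "nat \<Rightarrow> nat \<Rightarrow> real" where
  "mean_factor j i = real i * (real i - 1) / (real j * (real j - 1))"

definition sq_factor :: "nat \<Rightarrow> nat \<Rightarrow> real" where
  "sq_factor j i = real i * (real i - 1)^2 * (real i - 2) / (real j * (real j - 1)^2 * (real j - 2))"

definition sq_mean :: "nat \<Rightarrow> nat \<Rightarrow> real \<Rightarrow> real" where
  "sq_mean j i s = sq_factor j i * s^2 + (mean_factor j i - sq_factor j i) * s"

lemma step_mean_quadratic:
  fixes j s a b :: real
  assumes "j \<noteq> 0" "j \<noteq> 1"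
  shows "step_mean j s (\<lambda>x. a * x^2 + b * x) =
     a * (s^2 * (j - 2) * (j - 3) + 2 * s * (j - 2)) / (j * (j - 1)) + b * s * (j - 2) / j"
proof -
  have key: "s * (s - 1) * (a * (s - 2)^2 + b * (s - 2)) + 2 * s * (j - s) * (a * (s - 1)^2 + b * (s - 1))
          + (j - s) * (j - s - 1) * (a * s^2 + b * s)
        = a * (s^2 * (j - 2) * (j - 3) + 2 * s * (j - 2)) + b * s * (j - 2) * (j - 1)"
    by (simp add: algebra_simps power2_eq_square)
  have "step_mean j s (\<lambda>x. a * x^2 + b * x)
          = (a * (s^2 * (j - 2) * (j - 3) + 2 * s * (j - 2)) + b * s * (j - 2) * (j - 1)) / (j * (j - 1))"
    by (simp only: step_mean_def key)
  also have "\<dots> = a * (s^2 * (j - 2) * (j - 3) + 2 * s * (j - 2)) / (j * (j - 1)) + b * s * (j - 2) / j"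
    using assms by (simp add: field_simps)
  finally show ?thesis .
qed

lemma mean_factor_harmonic:
  assumes "1 \<le> i" "i < j"
  shows "step_mean (real j) s (\<lambda>x. mean_factor (j - 1) i * x) = mean_factor j i * s"
proof (cases "j = 2")
  case True
  then show ?thesis
    using assms by (simp add: mean_factor_def step_mean_def)
next
  case False
  then have nz: "real j \<noteq> 0" "real j - 1 \<noteq> 0" "real j - 2 \<noteq> 0"
    using assms by auto
  have "step_mean (real j) s (\<lambda>x. mean_factor (j - 1) i * x) = mean_factor (j - 1) i * s * (real j - 2) / real j"
    using step_mean_quadratic[of "real j" s 0 "mean_factor (j - 1) i"] nz by simp
  also have "\<dots> = mean_factor j i * s"
  proof -
    have "mean_factor (j - 1) i = real i * (real i - 1) / ((real j - 1) * (real j - 2))"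
      unfolding mean_factor_def using assms by (simp add: of_nat_diff algebra_simps)
    then show ?thesis
      unfolding mean_factor_def using nz by (simp add: divide_simps; simp add: algebra_simps)
  qed
  finally show ?thesis .
qed

lemma sq_mean_harmonic:
  assumes "1 \<le> i" "i < j"
  shows "step_mean (real j) s (sq_mean (j - 1) i) = sq_mean j i s"
proof -
  have q: "step_mean (real j) s (sq_mean (j - 1) i) =
     sq_factor (j - 1) i * (s^2 * (real j - 2) * (real j - 3) + 2 * s * (real j - 2)) / (real j * (real j - 1))
      + (mean_factor (j - 1) i - sq_factor (j - 1) i) * s * (real j - 2) / real j"
    using step_mean_quadratic[of "real j" s "sq_factor (j - 1) i" "mean_factor (j - 1) i - sq_factor (j - 1) i"] assms
    unfolding sq_mean_def by simp
  consider "j = 2" | "j = 3" | "j \<ge> 4"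
    using assms by linarith
  then show ?thesis
  proof cases
    case 1
    then have "i = 1"
      using assms by simp
    then show ?thesis
      unfolding q sq_mean_def using 1 by (simp add: mean_factor_def sq_factor_def)
  next
    case 2
    then have "i = 1 \<or> i = 2"
      using assms by auto
    then show ?thesis
      unfolding q sq_mean_def using 2 by (auto simp: mean_factor_def sq_factor_def)
  next
    case 3
    then have nz: "real j - 3 \<noteq> 0" "real j - 2 \<noteq> 0" "real j - 1 \<noteq> 0" "real j \<noteq> 0"
      by auto
    have "mean_factor (j - 1) i = real i * (real i - 1) / ((real j - 1) * (real j - 2))"
      unfolding mean_factor_def using assms by (simp add: of_nat_diff algebra_simps)
    moreover have "sq_factor (j - 1) i
        = real i * (real i - 1)^2 * (real i - 2) / ((real j - 1) * (real j - 2)^2 * (real j - 3))"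
      unfolding sq_factor_def using assms by (simp add: of_nat_diff algebra_simps)
    ultimately show ?thesis
      unfolding q sq_mean_def mean_factor_def sq_factor_def using nz
      by (simp add: divide_simps; simp add: algebra_simps power2_eq_square)
  qed
qed

text \<open>At the target level the factors reproduce the count and its square; for at most two blocks
  this needs that not all of them are singletons.\<close>
lemma factors_at_target:
  fixes s a :: nat
  assumes "s < a \<or> 3 \<le> a"
  shows "mean_factor a a * real s = real s" "sq_mean a a (real s) = real s ^ 2"
proof -
  have "s = 0 \<or> (a = 2 \<and> s = 1) \<or> 3 \<le> a"
    using assms by linarith
  then show "mean_factor a a * real s = real s" "sq_mean a a (real s) = real s ^ 2"
    by (auto simp: sq_mean_def mean_factor_def sq_factor_def)
qed

section \<open>Paths of the coalescent\<close>

lemma coal_step_support: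
  assumes P: "finite_partition P" "2 \<le> card P" and Q: "Q \<in> set_pmf (coal_step P)"
  shows "finite_partition Q" "card Q = card P - 1" "singletons Q \<subseteq> singletons P"
    "nsing P \<le> nsing Q + 2" "nsing Q < card Q"
proof -
  have fin: "finite P"
    using P by (simp add: finite_partition_def)
  obtain B where B: "B \<subseteq> P" "card B = 2" "Q = merge_blocks P B"
    using Q two_subsets_nonempty[OF fin P(2)] fin
    unfolding coal_step_eq by (auto intro: finite_subset[of _ "Pow P"])
  note merge = merge_pair[OF P(1) B(1,2), folded B(3)]
  show "finite_partition Q" "card Q = card P - 1" "nsing Q < card Q"
    using merge by auto
  show "singletons Q \<subseteq> singletons P"
    using merge(3) by (intro singletons_mono) auto
  have "card (singleton_blocks P) - card B \<le> card (singleton_blocks P - B)"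
    using B(2) by (intro diff_card_le_card_Diff) (simp add: card_ge_0_finite)
  then have "nsing P - 2 \<le> nsing Q"
    by (metis merge(3) B(2) card_singleton_blocks)
  then show "nsing P \<le> nsing Q + 2"
    by linarith
qed

lemma coal_step_finite: "finite P \<Longrightarrow> 2 \<le> card P \<Longrightarrow> finite (set_pmf (coal_step P))"
  unfolding coal_step_eq using two_subsets_nonempty[of P]
  by (auto intro: finite_subset[of _ "Pow P"])

lemma coal_path_head: "L \<in> set_pmf (coal_path P m) \<Longrightarrow> L ! 0 = P"
  by (cases m) auto

lemma coal_path_support:
  "finite_partition P \<Longrightarrow> m < card P \<Longrightarrow> L \<in> set_pmf (coal_path P m) \<Longrightarrow>
     (\<forall>t\<le>m. finite_partition (L ! t) \<and> card (L ! t) = card P - t) \<and>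
     (\<forall>t<m. singletons (L ! Suc t) \<subseteq> singletons (L ! t) \<and> nsing (L ! t) \<le> nsing (L ! Suc t) + 2
            \<and> nsing (L ! Suc t) < card (L ! Suc t))"
proof (induction m arbitrary: P L)
  case (Suc m)
  from Suc.prems(3) obtain Q L' where QL: "Q \<in> set_pmf (coal_step P)"
    "L' \<in> set_pmf (coal_path Q m)" "L = P # L'"
    by auto
  have c2: "2 \<le> card P"
    using Suc.prems by simp
  note step = coal_step_support[OF Suc.prems(1) c2 QL(1)]
  have m_lt: "m < card Q"
    using step(2) Suc.prems(2) by simp
  have IH: "\<forall>t\<le>m. finite_partition (L' ! t) \<and> card (L' ! t) = card Q - t"
    "\<forall>t<m. singletons (L' ! Suc t) \<subseteq> singletons (L' ! t) \<and> nsing (L' ! t) \<le> nsing (L' ! Suc t) + 2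
            \<and> nsing (L' ! Suc t) < card (L' ! Suc t)"
    using Suc.IH[OF step(1) m_lt QL(2)] by auto
  have head: "L' ! 0 = Q"
    using coal_path_head[OF QL(2)] .
  show ?case
    using IH step Suc.prems QL(3) head by (auto simp: nth_Cons split: nat.split)
qed auto

lemma coal_path_finite: "finite_partition P \<Longrightarrow> m < card P \<Longrightarrow> finite (set_pmf (coal_path P m))"
proof (induction m arbitrary: P)
  case (Suc m)
  have c2: "2 \<le> card P"
    using Suc.prems by simp
  have "finite (set_pmf (coal_step P))"
    using Suc.prems c2 by (intro coal_step_finite) (auto simp: finite_partition_def)
  moreover have "finite (set_pmf (coal_path Q m))" if "Q \<in> set_pmf (coal_step P)" for Q
    using Suc.IH coal_step_support[OF Suc.prems(1) c2 that] Suc.prems by auto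
  ultimately show ?case
    by simp
qed simp

lemma expectation_cong_support:
  fixes f g :: "'a \<Rightarrow> real"
  shows "(\<And>x. x \<in> set_pmf p \<Longrightarrow> f x = g x) \<Longrightarrow> measure_pmf.expectation p f = measure_pmf.expectation p g"
  by (rule integral_cong_AE) (auto intro: AE_pmfI)

lemma expectation_coal_path_Suc:
  fixes h :: "'a set set list \<Rightarrow> real"
  assumes P: "finite_partition P" "Suc m < card P"
  shows "measure_pmf.expectation (coal_path P (Suc m)) h =
    measure_pmf.expectation (coal_step P) (\<lambda>Q. measure_pmf.expectation (coal_path Q m) (\<lambda>L. h (P # L)))"
proof -
  have c2: "2 \<le> card P"
    using P by simp
  have fin_step: "finite (set_pmf (coal_step P))"
    using P c2 by (intro coal_step_finite) (auto simp: finite_partition_def)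
  have "finite (set_pmf (map_pmf ((#) P) (coal_path Q m)))" if "Q \<in> set_pmf (coal_step P)" for Q
    using coal_path_finite[of Q m] coal_step_support[OF P(1) c2 that] P by auto
  then show ?thesis
    unfolding coal_path.simps using fin_step
    by (simp add: pmf_expectation_bind[of "set_pmf (coal_step P)"] integral_measure_pmf[of "set_pmf (coal_step P)"])
qed

lemma expectation_harmonic_along_path:
  fixes f h :: "'a set set \<Rightarrow> real"
  assumes harmonic: "\<And>Q. finite_partition Q \<Longrightarrow> a < card Q \<Longrightarrow>
                        measure_pmf.expectation (coal_step Q) h = h Q"
  shows "finite_partition P \<Longrightarrow> t \<le> u \<Longrightarrow> u \<le> m \<Longrightarrow> m < card P \<Longrightarrow> a + u \<le> card P \<Longrightarrow>
    measure_pmf.expectation (coal_path P m) (\<lambda>L. f (L ! t) * h (L ! u))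
      = measure_pmf.expectation (coal_path P m) (\<lambda>L. f (L ! t) * h (L ! t))"
proof (induction m arbitrary: P f t u)
  case (Suc m)
  have P: "finite_partition P" "Suc m < card P" "2 \<le> card P"
    using Suc.prems by auto
  have at_head: "measure_pmf.expectation (coal_path P (Suc m)) (\<lambda>L. f (L ! 0) * h (L ! 0)) = f P * h P"
    by (subst expectation_cong_support[where g = "\<lambda>_. f P * h P"]) (auto dest: coal_path_head)
  consider "u = 0" | u' where "t = 0" "u = Suc u'" | t' u' where "t = Suc t'" "u = Suc u'"
    using Suc.prems(2) by (cases u; cases t) auto
  then show ?case
  proof cases
    case 1
    then show ?thesis
      using Suc.prems by simp
  next
    case (2 u')
    have "measure_pmf.expectation (coal_path P (Suc m)) (\<lambda>L. f (L ! t) * h (L ! u))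
        = measure_pmf.expectation (coal_step P)
            (\<lambda>Q. measure_pmf.expectation (coal_path Q m) (\<lambda>L. f P * h (L ! u')))"
      using expectation_coal_path_Suc[OF P(1,2)] 2 by simp
    also have "\<dots> = measure_pmf.expectation (coal_step P) (\<lambda>Q. f P * h Q)"
    proof (rule expectation_cong_support)
      fix Q assume Q: "Q \<in> set_pmf (coal_step P)"
      note step = coal_step_support[OF P(1,3) Q]
      have "measure_pmf.expectation (coal_path Q m) (\<lambda>L. f P * h (L ! u'))
          = measure_pmf.expectation (coal_path Q m) (\<lambda>L. f P * h (L ! 0))"
        using Suc.IH[where P = Q and t = 0 and u = u' and f = "\<lambda>_. f P"] step Suc.prems 2 by simp
      also have "\<dots> = f P * h Q"
        by (subst expectation_cong_support[where g = "\<lambda>_. f P * h Q"]) (auto dest: coal_path_head)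
      finally show "measure_pmf.expectation (coal_path Q m) (\<lambda>L. f P * h (L ! u')) = f P * h Q" .
    qed
    also have "\<dots> = f P * h P"
      using harmonic[OF P(1)] Suc.prems 2 by simp
    finally show ?thesis
      using at_head 2 by simp
  next
    case (3 t' u')
    have "measure_pmf.expectation (coal_path P (Suc m)) (\<lambda>L. f (L ! t) * h (L ! u))
        = measure_pmf.expectation (coal_step P)
            (\<lambda>Q. measure_pmf.expectation (coal_path Q m) (\<lambda>L. f (L ! t') * h (L ! u')))"
      using expectation_coal_path_Suc[OF P(1,2)] 3 by simp
    also have "\<dots> = measure_pmf.expectation (coal_step P)
            (\<lambda>Q. measure_pmf.expectation (coal_path Q m) (\<lambda>L. f (L ! t') * h (L ! t')))"
    proof (rule expectation_cong_support)
      fix Q assume Q: "Q \<in> set_pmf (coal_step P)"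
      show "measure_pmf.expectation (coal_path Q m) (\<lambda>L. f (L ! t') * h (L ! u'))
          = measure_pmf.expectation (coal_path Q m) (\<lambda>L. f (L ! t') * h (L ! t'))"
        using Suc.IH[where P = Q and t = t' and u = u' and f = f] coal_step_support[OF P(1,3) Q] Suc.prems 3 by simp
    qed
    also have "\<dots> = measure_pmf.expectation (coal_path P (Suc m)) (\<lambda>L. f (L ! t) * h (L ! t))"
      using expectation_coal_path_Suc[OF P(1,2)] 3 by simp
    finally show ?thesis .
  qed
qed simp

corollary expectation_harmonic:
  fixes h :: "'a set set \<Rightarrow> real"
  assumes harmonic: "\<And>Q. finite_partition Q \<Longrightarrow> a < card Q \<Longrightarrow>
                        measure_pmf.expectation (coal_step Q) h = h Q"
    and P: "finite_partition P" "u \<le> m" "m < card P" "a + u \<le> card P"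
  shows "measure_pmf.expectation (coal_path P m) (\<lambda>L. h (L ! u)) = h P"
proof -
  have "measure_pmf.expectation (coal_path P m) (\<lambda>L. h (L ! u))
          = measure_pmf.expectation (coal_path P m) (\<lambda>L. 1 * h (L ! 0))"
    using expectation_harmonic_along_path[OF harmonic, where P = P and t = 0 and u = u and m = m and f = "\<lambda>_. 1"] P by simp
  also have "\<dots> = h P"
    by (subst expectation_cong_support[where g = "\<lambda>_. h P"]) (auto dest: coal_path_head)
  finally show ?thesis .
qed

lemma coal_step_harmonic:
  fixes F :: "nat \<Rightarrow> real \<Rightarrow> real"
  assumes Q: "finite_partition Q" "2 \<le> card Q"
    and step: "step_mean (real (card Q)) (real (nsing Q)) (F (card Q - 1)) = F (card Q) (real (nsing Q))"
  shows "measure_pmf.expectation (coal_step Q) (\<lambda>R. F (card R) (real (nsing R))) = F (card Q) (real (nsing Q))"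
proof -
  have "measure_pmf.expectation (coal_step Q) (\<lambda>R. F (card R) (real (nsing R)))
      = measure_pmf.expectation (coal_step Q) (\<lambda>R. F (card Q - 1) (real (nsing R)))"
    using Q by (intro expectation_cong_support) (simp add: coal_step_support(2))
  also have "\<dots> = F (card Q) (real (nsing Q))"
    using expectation_coal_step[OF Q] step by simp
  finally show ?thesis .
qed

text \<open>Along a complete path started with at least three blocks, every partition satisfies the
  hypothesis of factors_at_target.\<close>
lemma coal_path_levels:
  assumes "finite_partition P" "3 \<le> card P" "L \<in> set_pmf (coal_path P (card P - 1))"
    "t \<le> card P - 1"
  shows "card (L ! t) = card P - t" "nsing (L ! t) < card (L ! t) \<or> 3 \<le> card (L ! t)"
proof -
  note support = coal_path_support[OF assms(1) _ assms(3)]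
  show card: "card (L ! t) = card P - t"
    using support assms(2,4) by auto
  show "nsing (L ! t) < card (L ! t) \<or> 3 \<le> card (L ! t)"
  proof (cases t)
    case 0
    then show ?thesis
      using card assms(2) by simp
  next
    case (Suc t')
    then show ?thesis
      using support assms(2,4) by auto
  qed
qed

text \<open>First and mixed second moments of the singleton counts along a complete path; index
  card P - a of the path is the partition with a blocks.\<close>
lemma expected_singletons:
  assumes P: "finite_partition P" "3 \<le> card P" and a: "1 \<le> a" "a \<le> card P"
  shows "measure_pmf.expectation (coal_path P (card P - 1)) (\<lambda>L. real (nsing (L ! (card P - a))))
           = mean_factor (card P) a * real (nsing P)"
proof -
  have "measure_pmf.expectation (coal_path P (card P - 1)) (\<lambda>L. real (nsing (L ! (card P - a))))
      = measure_pmf.expectation (coal_path P (card P - 1))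
          (\<lambda>L. mean_factor (card (L ! (card P - a))) a * real (nsing (L ! (card P - a))))"
  proof (rule expectation_cong_support)
    fix L assume "L \<in> set_pmf (coal_path P (card P - 1))"
    note level = coal_path_levels[OF P this, of "card P - a"]
    show "real (nsing (L ! (card P - a)))
            = mean_factor (card (L ! (card P - a))) a * real (nsing (L ! (card P - a)))"
      using level factors_at_target(1) a by simp
  qed
  also have "\<dots> = mean_factor (card P) a * real (nsing P)"
    using P a mean_factor_harmonic[OF a(1)]
    by (intro expectation_harmonic[where a = a] coal_step_harmonic[where F = "\<lambda>j x. mean_factor j a * x"]) auto
  finally show ?thesis .
qed

lemma expected_singleton_products:
  assumes P: "finite_partition P" "3 \<le> card P" and ab: "1 \<le> b" "b \<le> a" "a \<le> card P"
  shows "measure_pmf.expectation (coal_path P (card P - 1))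
           (\<lambda>L. real (nsing (L ! (card P - a))) * real (nsing (L ! (card P - b))))
           = mean_factor a b * sq_mean (card P) a (real (nsing P))"
proof -
  define K where "K = coal_path P (card P - 1)"
  define t where "t = card P - a"
  define u where "u = card P - b"
  have levels: "card (L ! t) = a" "card (L ! u) = b"
    "nsing (L ! t) < card (L ! t) \<or> 3 \<le> card (L ! t)" "nsing (L ! u) < card (L ! u) \<or> 3 \<le> card (L ! u)"
    if "L \<in> set_pmf K" for L
  proof -
    note level = coal_path_levels[OF P that[unfolded K_def]]
    have "t \<le> card P - 1" "u \<le> card P - 1" "card P - t = a" "card P - u = b"
      using ab unfolding t_def u_def by auto
    then show "card (L ! t) = a" "card (L ! u) = b"
      "nsing (L ! t) < card (L ! t) \<or> 3 \<le> card (L ! t)" "nsing (L ! u) < card (L ! u) \<or> 3 \<le> card (L ! u)"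
      using level[of t] level[of u] by auto
  qed
  have "measure_pmf.expectation K (\<lambda>L. real (nsing (L ! t)) * real (nsing (L ! u)))
      = measure_pmf.expectation K (\<lambda>L. real (nsing (L ! t)) * (mean_factor (card (L ! u)) b * real (nsing (L ! u))))"
    using levels factors_at_target(1) by (intro expectation_cong_support) simp
  also have "\<dots> = measure_pmf.expectation K
                    (\<lambda>L. real (nsing (L ! t)) * (mean_factor (card (L ! t)) b * real (nsing (L ! t))))"
    unfolding K_def t_def u_def using P ab mean_factor_harmonic[OF ab(1)]
    by (intro expectation_harmonic_along_path[where a = b]
          coal_step_harmonic[where F = "\<lambda>j x. mean_factor j b * x"]) auto
  also have "\<dots> = measure_pmf.expectation K (\<lambda>L. mean_factor a b * sq_mean (card (L ! t)) a (real (nsing (L ! t))))"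
    using levels factors_at_target(2) by (intro expectation_cong_support) (simp add: power2_eq_square)
  also have "\<dots> = mean_factor a b * sq_mean (card P) a (real (nsing P))"
    unfolding K_def t_def using P ab sq_mean_harmonic[of a]
    by (subst expectation_harmonic[where a = a]) (auto intro!: coal_step_harmonic[where F = "\<lambda>j. sq_mean j a"])
  finally show ?thesis
    unfolding K_def t_def u_def .
qed

lemma initial_partition:
  "finite_partition ((\<lambda>i. {i}) ` {1..n})" "card ((\<lambda>i. {i}) ` {1..n}) = n"
  "singletons ((\<lambda>i. {i}) ` {1..n}) = {1..n}"
proof -
  show "card ((\<lambda>i. {i}) ` {1..n}) = n"
    by (subst card_image) (auto simp: inj_on_def)
  show "finite_partition ((\<lambda>i. {i}) ` {1..n})"
    unfolding finite_partition_def pairwise_def disjnt_def by auto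
  show "singletons ((\<lambda>i. {i}) ` {1..n}) = {1..n}"
    unfolding singletons_def by auto
qed

text \<open>The value of E(S_a S_b) for b \<le> a, where S_a is the number of singletons of pi_a.\<close>
definition joint_moment :: "nat \<Rightarrow> nat \<Rightarrow> nat \<Rightarrow> real" where
  "joint_moment n a b = real b * (real b - 1) * ((real n - 2) + (real a - 1) * (real a - 2))
                          / ((real n - 1) * (real n - 2))"

lemma kingman_expected_singletons:
  assumes "3 \<le> n" "1 \<le> a" "a \<le> n"
  shows "measure_pmf.expectation (kingman n) (\<lambda>L. real (nsing (part n L a)))
           = real a * (real a - 1) / (real n - 1)"
proof -
  have "measure_pmf.expectation (kingman n) (\<lambda>L. real (nsing (part n L a))) = mean_factor n a * real n"
    using expected_singletons[OF initial_partition(1), of n a] assms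
    unfolding kingman_def part_def initial_partition by simp
  also have "\<dots> = real a * (real a - 1) / (real n - 1)"
    using assms by (simp add: mean_factor_def divide_simps)
  finally show ?thesis .
qed

lemma kingman_expected_singleton_products:
  assumes "3 \<le> n" "1 \<le> b" "b \<le> a" "a \<le> n"
  shows "measure_pmf.expectation (kingman n) (\<lambda>L. real (nsing (part n L a)) * real (nsing (part n L b)))
           = joint_moment n a b"
proof -
  have "measure_pmf.expectation (kingman n) (\<lambda>L. real (nsing (part n L a)) * real (nsing (part n L b)))
          = mean_factor a b * sq_mean n a (real n)"
    using expected_singleton_products[OF initial_partition(1), of n b a] assms
    unfolding kingman_def part_def initial_partition by simp
  also have "\<dots> = joint_moment n a b"
  proof (cases "a = 1")
    case True
    then show ?thesis
      using assms by (simp add: mean_factor_def joint_moment_def)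
  next
    case False
    then have "real a \<noteq> 0" "real a - 1 \<noteq> 0" "real n \<noteq> 0" "real n - 1 \<noteq> 0" "real n - 2 \<noteq> 0"
      using assms by auto
    then show ?thesis
      unfolding joint_moment_def sq_mean_def mean_factor_def sq_factor_def
      by (simp add: divide_simps; simp add: algebra_simps power2_eq_square)
  qed
  finally show ?thesis .
qed

lemma Max_outside_increasing_family:
  fixes S :: "nat \<Rightarrow> 'a set"
  assumes mono: "\<And>k l. 1 \<le> k \<Longrightarrow> k \<le> l \<Longrightarrow> l \<le> n \<Longrightarrow> S k \<subseteq> S l"
    and i: "i \<notin> S 1" and k: "1 \<le> k" "k < n"
  shows "Max {k \<in> {1..n}. i \<notin> S k} = k \<longleftrightarrow> i \<in> S (Suc k) - S k"
proof -
  define D where "D = {k \<in> {1..n}. i \<notin> S k}"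
  have finD: "finite D" and oneD: "1 \<in> D"
    using i k unfolding D_def by auto
  show ?thesis
    unfolding D_def[symmetric]
  proof
    assume max: "Max D = k"
    have "k \<in> D"
      using Max_in[OF finD] oneD max by auto
    moreover have "Suc k \<notin> D"
      using Max_ge[OF finD, of "Suc k"] max by auto
    ultimately show "i \<in> S (Suc k) - S k"
      using k unfolding D_def by auto
  next
    assume new: "i \<in> S (Suc k) - S k"
    have "l \<le> k" if "l \<in> D" for l
    proof (rule ccontr)
      assume "\<not> l \<le> k"
      then have "S (Suc k) \<subseteq> S l"
        using that k unfolding D_def by (intro mono) auto
      then show False
        using new that unfolding D_def by auto
    qed
    moreover have "k \<in> D"
      using new k unfolding D_def by auto
    ultimately show "Max D = k"
      using finD by (intro Max_eqI) auto
  qed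
qed

lemma decreasing_chain:
  fixes A :: "nat \<Rightarrow> 'a set"
  assumes step: "\<And>t. t < m \<Longrightarrow> A (Suc t) \<subseteq> A t" and "t \<le> u" "u \<le> m"
  shows "A u \<subseteq> A t"
  using assms(2,3)
proof (induction u rule: dec_induct)
  case (step u)
  then show ?case
    using assms(1)[of u] by auto
qed simp

lemma kingman_singletons:
  assumes n: "3 \<le> n" and L: "L \<in> set_pmf (kingman n)"
  shows kingman_singletons_mono: "\<And>k l. 1 \<le> k \<Longrightarrow> k \<le> l \<Longrightarrow> l \<le> n \<Longrightarrow>
                                     singletons (part n L k) \<subseteq> singletons (part n L l)"
    and kingman_singletons_range: "\<And>k. 1 \<le> k \<Longrightarrow> k \<le> n \<Longrightarrow> singletons (part n L k) \<subseteq> {1..n}"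
    and kingman_singletons_last: "singletons (part n L 1) = {}"
    and kingman_singletons_step: "\<And>k. 1 \<le> k \<Longrightarrow> k < n \<Longrightarrow>
                                     nsing (part n L (Suc k)) \<le> nsing (part n L k) + 2"
proof -
  note init = initial_partition[of n]
  have L': "L \<in> set_pmf (coal_path ((\<lambda>i. {i}) ` {1..n}) (card ((\<lambda>i. {i}) ` {1..n}) - 1))"
    using L unfolding kingman_def init(2) .
  have support: "\<forall>t<n - 1. singletons (L ! Suc t) \<subseteq> singletons (L ! t) \<and> nsing (L ! t) \<le> nsing (L ! Suc t) + 2"
    using coal_path_support[OF init(1) _ L'] n unfolding init(2) by auto
  have chain: "singletons (L ! Suc t) \<subseteq> singletons (L ! t)" if "t < n - 1" for t
    using support that by blast
  show mono: "singletons (part n L k) \<subseteq> singletons (part n L l)" if "1 \<le> k" "k \<le> l" "l \<le> n" for k l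
    using decreasing_chain[of "n - 1" "\<lambda>t. singletons (L ! t)", OF chain, of "n - l" "n - k"] that
    unfolding part_def by simp
  have top: "singletons (part n L n) = {1..n}"
    using coal_path_head[OF L'] init(3) unfolding part_def by simp
  show range: "singletons (part n L k) \<subseteq> {1..n}" if "1 \<le> k" "k \<le> n" for k
    using mono[of k n] that top by simp
  have "nsing (part n L 1) < card (part n L 1)" "card (part n L 1) = 1"
    using coal_path_levels[OF init(1) _ L', of "n - 1"] n unfolding init(2) part_def by auto
  moreover have "finite (singletons (part n L 1))"
    using range[of 1] n by (auto intro: finite_subset)
  ultimately show "singletons (part n L 1) = {}"
    by simp
  show "nsing (part n L (Suc k)) \<le> nsing (part n L k) + 2" if "1 \<le> k" "k < n" for k
    using support[rule_format, of "n - Suc k"] that unfolding part_def by (simp add: Suc_diff_Suc)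
qed

lemma kingman_Xk:
  assumes n: "3 \<le> n" and L: "L \<in> set_pmf (kingman n)" and k: "1 \<le> k" "k < n"
  shows "real (Xk n k L) = real (nsing (part n L (Suc k))) - real (nsing (part n L k))"
    "Xk n k L \<le> 2"
proof -
  define S where "S k = singletons (part n L k)" for k
  have sub: "S k \<subseteq> S (Suc k)" and fin: "finite (S k)"
    using kingman_singletons_mono[OF n L, of k "Suc k"] kingman_singletons_range[OF n L, of k] k
    unfolding S_def by (auto intro: finite_subset)
  have "rho n L i = Max {k \<in> {1..n}. i \<notin> S k}" for i
    unfolding rho_def S_def singletons_def by simp
  then have "{i \<in> {1..n}. rho n L i = k} = S (Suc k) - S k"
    using Max_outside_increasing_family[of n S _ k] kingman_singletons_mono[OF n L]
      kingman_singletons_last[OF n L] kingman_singletons_range[OF n L, of "Suc k"] k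
    unfolding S_def by auto
  then have X: "Xk n k L = card (S (Suc k)) - card (S k)"
    unfolding Xk_def using sub fin by (simp add: card_Diff_subset)
  moreover have "card (S k) \<le> card (S (Suc k))"
    using sub kingman_singletons_range[OF n L, of "Suc k"] k unfolding S_def
    by (intro card_mono) (auto intro: finite_subset)
  ultimately show "real (Xk n k L) = real (nsing (part n L (Suc k))) - real (nsing (part n L k))"
    unfolding S_def by (simp add: of_nat_diff)
  show "Xk n k L \<le> 2"
    using X kingman_singletons_step[OF n L k] unfolding S_def by simp
qed

section \<open>Moments of the X_k\<close>

text \<open>Kingman's coalescent has finitely many outcomes, so every function is integrable.\<close>
lemma kingman_finite: "finite (set_pmf (kingman n))"
proof (cases "n = 0")
  case False
  then show ?thesis
    using coal_path_finite[OF initial_partition(1), of "n - 1" n]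
    unfolding kingman_def initial_partition(2) by simp
qed (simp add: kingman_def)

lemma covariance_finite_pmf:
  fixes X Y :: "'a \<Rightarrow> real"
  assumes "finite (set_pmf p)"
  shows "measure_pmf.expectation p (\<lambda>x. (X x - measure_pmf.expectation p X) * (Y x - measure_pmf.expectation p Y))
           = measure_pmf.expectation p (\<lambda>x. X x * Y x) - measure_pmf.expectation p X * measure_pmf.expectation p Y"
proof -
  have int: "integrable (measure_pmf p) f" for f :: "'a \<Rightarrow> real"
    using assms by (rule integrable_measure_pmf_finite)
  define a b where "a = measure_pmf.expectation p X" and "b = measure_pmf.expectation p Y"
  have "measure_pmf.expectation p (\<lambda>x. (X x - a) * (Y x - b))
          = measure_pmf.expectation p (\<lambda>x. X x * Y x - b * X x - a * Y x + a * b)"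
    by (simp add: algebra_simps)
  also have "\<dots> = measure_pmf.expectation p (\<lambda>x. X x * Y x) - a * b"
    unfolding a_def b_def by (simp add: int)
  finally show ?thesis
    unfolding a_def b_def .
qed

lemma kingman_expected_singleton_products_sym:
  assumes "3 \<le> n" "1 \<le> a" "a \<le> n" "1 \<le> b" "b \<le> n"
  shows "measure_pmf.expectation (kingman n) (\<lambda>L. real (nsing (part n L a)) * real (nsing (part n L b)))
           = joint_moment n (max a b) (min a b)"
proof (cases "b \<le> a")
  case True
  then show ?thesis
    using kingman_expected_singleton_products[of n b a] assms by (simp add: max_def min_def)
next
  case False
  then show ?thesis
    using kingman_expected_singleton_products[of n a b] assms by (simp add: max_def min_def mult.commute)
qed

lemma kingman_expectation_Xk:
  assumes n: "3 \<le> n" and k: "1 \<le> k" "k < n"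
  shows "measure_pmf.expectation (kingman n) (\<lambda>L. real (Xk n k L)) = 2 * real k / (real n - 1)"
proof -
  have "measure_pmf.expectation (kingman n) (\<lambda>L. real (Xk n k L))
      = measure_pmf.expectation (kingman n)
          (\<lambda>L. real (nsing (part n L (Suc k))) - real (nsing (part n L k)))"
    using kingman_Xk(1)[OF n _ k] by (intro expectation_cong_support) simp
  also have "\<dots> = real (Suc k) * (real (Suc k) - 1) / (real n - 1) - real k * (real k - 1) / (real n - 1)"
    using kingman_expected_singletons[OF n] k
    by (simp add: integrable_measure_pmf_finite[OF kingman_finite])
  also have "\<dots> = 2 * real k / (real n - 1)"
    using n by (simp add: divide_simps) (simp add: algebra_simps)
  finally show ?thesis .
qed

text \<open>E(X_k X_l) for k \<le> l, by expanding X_k X_l into products of singleton counts.\<close>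
lemma kingman_expected_product_Xk:
  assumes n: "3 \<le> n" and kl: "1 \<le> k" "k \<le> l" "l < n"
  shows "measure_pmf.expectation (kingman n) (\<lambda>L. real (Xk n k L) * real (Xk n l L))
           = joint_moment n (Suc l) (Suc k) - joint_moment n (Suc l) k
               - joint_moment n (max l (Suc k)) (min l (Suc k)) + joint_moment n l k"
proof -
  define S where "S a L = real (nsing (part n L a))" for a L
  have "measure_pmf.expectation (kingman n) (\<lambda>L. real (Xk n k L) * real (Xk n l L))
      = measure_pmf.expectation (kingman n)
          (\<lambda>L. S (Suc l) L * S (Suc k) L - S (Suc l) L * S k L - S l L * S (Suc k) L + S l L * S k L)"
  proof (rule expectation_cong_support)
    fix L assume L: "L \<in> set_pmf (kingman n)"
    have Xk: "real (Xk n k L) = S (Suc k) L - S k L" and Xl: "real (Xk n l L) = S (Suc l) L - S l L"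
      using kingman_Xk(1)[OF n L] kl unfolding S_def by auto
    show "real (Xk n k L) * real (Xk n l L)
        = S (Suc l) L * S (Suc k) L - S (Suc l) L * S k L - S l L * S (Suc k) L + S l L * S k L"
      unfolding Xk Xl by (simp add: algebra_simps)
  qed
  also have "\<dots> = joint_moment n (Suc l) (Suc k) - joint_moment n (Suc l) k
               - joint_moment n (max l (Suc k)) (min l (Suc k)) + joint_moment n l k"
    using kingman_expected_singleton_products_sym[OF n] kl unfolding S_def
    by (simp add: integrable_measure_pmf_finite[OF kingman_finite])
  finally show ?thesis .
qed

lemma kingman_variance_Xk:
  assumes n: "3 \<le> n" and k: "1 \<le> k" "k < n"
  shows "measure_pmf.variance (kingman n) (\<lambda>L. real (Xk n k L))
           = 2 * real k * (real n - real k - 1) * (real n - 3) / ((real n - 1)^2 * (real n - 2))"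
proof -
  have nz: "real n - 1 \<noteq> 0" "real n - 2 \<noteq> 0"
    using n by auto
  have "measure_pmf.variance (kingman n) (\<lambda>L. real (Xk n k L))
      = measure_pmf.expectation (kingman n) (\<lambda>L. real (Xk n k L) * real (Xk n k L))
          - measure_pmf.expectation (kingman n) (\<lambda>L. real (Xk n k L))
            * measure_pmf.expectation (kingman n) (\<lambda>L. real (Xk n k L))"
    using covariance_finite_pmf[OF kingman_finite] by (simp add: power2_eq_square)
  also have "\<dots> = joint_moment n (Suc k) (Suc k) - 2 * joint_moment n (Suc k) k + joint_moment n k k
                    - (2 * real k / (real n - 1))^2"
    using kingman_expected_product_Xk[OF n k(1) order_refl k(2)] kingman_expectation_Xk[OF n k]
    by (simp add: power2_eq_square)
  also have "\<dots> = 2 * real k * (real n - real k - 1) * (real n - 3) / ((real n - 1)^2 * (real n - 2))"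
    unfolding joint_moment_def using nz
    by (simp add: divide_simps; simp add: algebra_simps power2_eq_square)
  finally show ?thesis .
qed

lemma kingman_covariance_Xk:
  assumes n: "3 \<le> n" and kl: "1 \<le> k" "k < l" "l < n"
  shows "measure_pmf.expectation (kingman n)
           (\<lambda>L. (real (Xk n k L) - measure_pmf.expectation (kingman n) (\<lambda>L. real (Xk n k L))) *
                (real (Xk n l L) - measure_pmf.expectation (kingman n) (\<lambda>L. real (Xk n l L))))
         = - (4 * real k * (real n - real l - 1)) / ((real n - 1)^2 * (real n - 2))"
proof -
  have nz: "real n - 1 \<noteq> 0" "real n - 2 \<noteq> 0"
    using n by auto
  have "max l (Suc k) = l" "min l (Suc k) = Suc k"
    using kl by auto
  then have product: "measure_pmf.expectation (kingman n) (\<lambda>L. real (Xk n k L) * real (Xk n l L))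
      = joint_moment n (Suc l) (Suc k) - joint_moment n (Suc l) k - joint_moment n l (Suc k) + joint_moment n l k"
    using kingman_expected_product_Xk[OF n kl(1) less_imp_le[OF kl(2)] kl(3)] by simp
  have mean_k: "measure_pmf.expectation (kingman n) (\<lambda>L. real (Xk n k L)) = 2 * real k / (real n - 1)"
    and mean_l: "measure_pmf.expectation (kingman n) (\<lambda>L. real (Xk n l L)) = 2 * real l / (real n - 1)"
    using kingman_expectation_Xk[OF n] kl by auto
  have "measure_pmf.expectation (kingman n)
           (\<lambda>L. (real (Xk n k L) - measure_pmf.expectation (kingman n) (\<lambda>L. real (Xk n k L))) *
                (real (Xk n l L) - measure_pmf.expectation (kingman n) (\<lambda>L. real (Xk n l L))))
        = measure_pmf.expectation (kingman n) (\<lambda>L. real (Xk n k L) * real (Xk n l L))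
            - measure_pmf.expectation (kingman n) (\<lambda>L. real (Xk n k L))
              * measure_pmf.expectation (kingman n) (\<lambda>L. real (Xk n l L))"
    by (rule covariance_finite_pmf[OF kingman_finite])
  also have "\<dots> = joint_moment n (Suc l) (Suc k) - joint_moment n (Suc l) k - joint_moment n l (Suc k)
                    + joint_moment n l k - 2 * real k / (real n - 1) * (2 * real l / (real n - 1))"
    unfolding product mean_k mean_l ..
  also have "\<dots> = - (4 * real k * (real n - real l - 1)) / ((real n - 1)^2 * (real n - 2))"
    unfolding joint_moment_def using nz
    by (simp add: divide_simps; simp add: algebra_simps power2_eq_square)
  finally show ?thesis .
qed

theorem mainTheorem13:
  fixes n :: nat
  assumes "n \<ge> 3"
  shows "(\<forall>k. 1 \<le> k \<and> k < n \<longrightarrow>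
           (\<forall>L \<in> set_pmf (kingman n). Xk n k L \<in> {0, 1, 2}) \<and>
           measure_pmf.expectation (kingman n) (\<lambda>L. real (Xk n k L)) = 2 * real k / (real n - 1) \<and>
           measure_pmf.variance (kingman n) (\<lambda>L. real (Xk n k L)) =
             2 * real k * (real n - real k - 1) * (real n - 3) / ((real n - 1)^2 * (real n - 2)))
       \<and> (\<forall>k l. 1 \<le> k \<and> k < l \<and> l < n \<longrightarrow>
           measure_pmf.expectation (kingman n)
             (\<lambda>L. (real (Xk n k L) - measure_pmf.expectation (kingman n) (\<lambda>L. real (Xk n k L))) *
                  (real (Xk n l L) - measure_pmf.expectation (kingman n) (\<lambda>L. real (Xk n l L))))
           = - (4 * real k * (real n - real l - 1)) / ((real n - 1)^2 * (real n - 2)))"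
proof (intro conjI allI impI ballI)
  fix k assume k: "1 \<le> k \<and> k < n"
  show "Xk n k L \<in> {0, 1, 2}" if "L \<in> set_pmf (kingman n)" for L
    using kingman_Xk(2)[OF assms that] k by (auto simp: le_Suc_eq eval_nat_numeral)
  show "measure_pmf.expectation (kingman n) (\<lambda>L. real (Xk n k L)) = 2 * real k / (real n - 1)"
    using kingman_expectation_Xk[OF assms] k by blast
  show "measure_pmf.variance (kingman n) (\<lambda>L. real (Xk n k L)) =
          2 * real k * (real n - real k - 1) * (real n - 3) / ((real n - 1)^2 * (real n - 2))"
    using kingman_variance_Xk[OF assms] k by blast
next
  fix k l assume "1 \<le> k \<and> k < l \<and> l < n"
  then show "measure_pmf.expectation (kingman n)
             (\<lambda>L. (real (Xk n k L) - measure_pmf.expectation (kingman n) (\<lambda>L. real (Xk n k L))) *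
                  (real (Xk n l L) - measure_pmf.expectation (kingman n) (\<lambda>L. real (Xk n l L))))
           = - (4 * real k * (real n - real l - 1)) / ((real n - 1)^2 * (real n - 2))"
    using kingman_covariance_Xk[OF assms] by blast
qed

end
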